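(* Let $X_1,\ldots,X_n$ be non-empty sets, $\Omega=X_1\times\cdots\times X_n$, and let $F\subset\Omega$ be a full set. If $F$ has finitely many related components, say $F=\bigcup_{i=1}^k R_i$ with $R_1,\ldots,R_k$ the distinct related components of $F$, then $k=1$.
   Context: For $1\le i\le n$, $\Pi_i:\Omega\to X_i$ denotes the canonical projection. A subset $S\subset\Omega$ is good if every complex-valued function $f$ on $S$ can be written as $f(x_1,\ldots,x_n)=u_1(x_1)+\cdots+u_n(x_n)$ for all $(x_1,\ldots,x_n)\in S$, for suitable complex-valued functions $u_i$ on $X_i$. A subset $S\subset\Omega$ is full if $S$ is a maximal good subset of $\Pi_1S\times\cdots\times\Pi_nS$ (i.e. $S$ is good and no good subset of $\Pi_1S\times\cdots\times\Pi_nS$ strictly contains $S$). For a good set $S$, two points $x,y\in S$ are related if there is a finite full subset of $S$ containing both $x$ and $y$; this is an equivalence relation on $S$, and its equivalence classes are the related components of $S$. *)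

theory Defs
  imports Complex_Main
begin

text \<open>Points of Omega = X_1 x ... x X_n are functions from a finite index type 'i
  (with CARD('i) = n) to a common value type 'a; the i-th coordinate is x i.\<close>

definition proj :: "'i \<Rightarrow> ('i \<Rightarrow> 'a) set \<Rightarrow> 'a set" where
  "proj i S = (\<lambda>x. x i) ` S"

definition box :: "('i \<Rightarrow> 'a) set \<Rightarrow> ('i \<Rightarrow> 'a) set" where
  "box S = {y. \<forall>i. y i \<in> proj i S}"

definition good :: "('i::finite \<Rightarrow> 'a) set \<Rightarrow> bool" where
  "good S \<longleftrightarrow> (\<forall>f :: ('i \<Rightarrow> 'a) \<Rightarrow> complex.
      \<exists>u :: 'i \<Rightarrow> 'a \<Rightarrow> complex. \<forall>x\<in>S. f x = (\<Sum>i\<in>UNIV. u i (x i)))"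

definition full :: "('i::finite \<Rightarrow> 'a) set \<Rightarrow> bool" where
  "full S \<longleftrightarrow> S \<subseteq> box S \<and> good S \<and>
     (\<forall>T. good T \<and> S \<subseteq> T \<and> T \<subseteq> box S \<longrightarrow> T = S)"

definition related :: "('i::finite \<Rightarrow> 'a) set \<Rightarrow> ('i \<Rightarrow> 'a) \<Rightarrow> ('i \<Rightarrow> 'a) \<Rightarrow> bool" where
  "related S x y \<longleftrightarrow> (\<exists>T. finite T \<and> full T \<and> T \<subseteq> S \<and> x \<in> T \<and> y \<in> T)"

definition related_components :: "('i::finite \<Rightarrow> 'a) set \<Rightarrow> ('i \<Rightarrow> 'a) set set" where
  "related_components S = S // {(x, y). related S x y}"

end

theory Submission
  imports Defs
begin

(* A set S is full iff it is good and every coordinate sum u_1(x_1) + ... + u_n(x_n) vanishing on S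
   vanishes on the whole box Pi_1 S x ... x Pi_n S: a box point where such a sum does not vanish can
   be adjoined to S keeping it good, and conversely the indicator of an adjoined point is a
   coordinate sum on the larger good set.
   If a coordinate sum vanishes on a full set, each u_i is constant on the i-th projection. Hence full
   sets through a common point have a full union, and every finite part of a related component lies
   in a finite full subset of that component. Given finitely many components, choose in each one a
   finite full set containing, for any two components whose i-th projections meet, points of both
   agreeing in coordinate i. A coordinate sum vanishing on the union of these sets is constant on
   the projections of each component, the constants agree where projections meet, so on the box it
   coincides with a coordinate sum vanishing on all of F, hence on the box of F. The union is thus a
   finite full subset of F through any two given points. *)

definition coord_sum :: "('i::finite \<Rightarrow> 'a \<Rightarrow> complex) \<Rightarrow> ('i \<Rightarrow> 'a) \<Rightarrow> complex" where
  "coord_sum u x = (\<Sum>i\<in>UNIV. u i (x i))"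

lemma good_iff_coord_sum: "good S \<longleftrightarrow> (\<forall>f. \<exists>u. \<forall>x\<in>S. f x = coord_sum u x)"
  by (simp add: good_def coord_sum_def)

lemma coord_sum_add_scaled:
  "coord_sum (\<lambda>i a. v i a + c * u i a) x = coord_sum v x + c * coord_sum u x"
  by (simp add: coord_sum_def sum.distrib sum_distrib_left)

lemma coord_sum_update: "coord_sum u (x(i := a)) = coord_sum u x - u i (x i) + u i a"
proof -
  have "coord_sum u (x(i := a)) = u i a + (\<Sum>j\<in>UNIV - {i}. u j (x j))"
    by (simp add: coord_sum_def sum.remove[of UNIV i])
  moreover have "coord_sum u x = u i (x i) + (\<Sum>j\<in>UNIV - {i}. u j (x j))"
    by (simp add: coord_sum_def sum.remove[of UNIV i])
  ultimately show ?thesis by simp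
qed

lemma good_mono: "good S \<Longrightarrow> T \<subseteq> S \<Longrightarrow> good T"
  unfolding good_def by blast

lemma subset_box: "S \<subseteq> box S"
  by (auto simp: box_def proj_def)

lemma box_mono: "S \<subseteq> T \<Longrightarrow> box S \<subseteq> box T"
  unfolding box_def proj_def by blast

lemma box_singleton: "box {x} = {x}"
  by (auto simp: box_def proj_def)

lemma proj_Un: "proj i (S \<union> T) = proj i S \<union> proj i T"
  by (simp add: proj_def image_Un)

lemma good_insert_nonvanishing:
  assumes "good S" and van: "\<forall>x\<in>S. coord_sum u x = 0" and nz: "coord_sum u z \<noteq> 0"
  shows "good (insert z S)"
  unfolding good_iff_coord_sum
proof
  fix f :: "_ \<Rightarrow> complex"
  obtain v where v: "\<forall>x\<in>S. f x = coord_sum v x"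
    using \<open>good S\<close> unfolding good_iff_coord_sum by blast
  define c where "c = (f z - coord_sum v z) / coord_sum u z"
  have "c * coord_sum u z = f z - coord_sum v z" using nz by (simp add: c_def)
  then have "f x = coord_sum (\<lambda>i a. v i a + c * u i a) x" if "x \<in> insert z S" for x
    using that v van by (auto simp: coord_sum_add_scaled)
  then show "\<exists>w. \<forall>x\<in>insert z S. f x = coord_sum w x" by blast
qed

lemma full_vanishing_on_box:
  assumes "full S" and van: "\<forall>x\<in>S. coord_sum u x = 0" and z: "z \<in> box S"
  shows "coord_sum u z = 0"
proof (rule ccontr)
  assume nz: "coord_sum u z \<noteq> 0"
  with van have "z \<notin> S" by auto
  moreover have "good (insert z S)"
    using assms(1) van nz by (intro good_insert_nonvanishing) (auto simp: full_def)
  moreover have "insert z S \<subseteq> box S" using z subset_box by blast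
  ultimately show False using \<open>full S\<close> unfolding full_def by blast
qed

lemma full_if_vanishing_on_box:
  assumes "good S"
    and van: "\<And>u z. \<forall>x\<in>S. coord_sum u x = 0 \<Longrightarrow> z \<in> box S \<Longrightarrow> coord_sum u z = 0"
  shows "full S"
  unfolding full_def
proof (intro conjI allI impI subset_box \<open>good S\<close>)
  fix T assume T: "good T \<and> S \<subseteq> T \<and> T \<subseteq> box S"
  show "T = S"
  proof (rule ccontr)
    assume "T \<noteq> S"
    with T obtain z where z: "z \<in> T" "z \<notin> S" by blast
    \<comment> \<open>the indicator of z is a coordinate sum on the good set T\<close>
    from T have "\<forall>f. \<exists>u. \<forall>x\<in>T. f x = coord_sum u x"
      by (simp add: good_iff_coord_sum)
    then obtain u where u: "\<forall>x\<in>T. of_bool (x = z) = coord_sum u x"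
      by (elim allE[of _ "\<lambda>x. of_bool (x = z)"]) blast
    have "\<forall>x\<in>S. coord_sum u x = 0"
    proof
      fix x assume "x \<in> S"
      with T z have "x \<in> T" "x \<noteq> z" by auto
      with u show "coord_sum u x = 0" by force
    qed
    with z T have "coord_sum u z = 0" using van by blast
    moreover have "coord_sum u z = 1" using bspec[OF u \<open>z \<in> T\<close>] by simp
    ultimately show False by simp
  qed
qed

lemma full_singleton: "full {x}"
proof (rule full_if_vanishing_on_box)
  have "f x = coord_sum (\<lambda>i a. if i = undefined then f x else 0) x" for f :: "_ \<Rightarrow> complex"
    by (simp add: coord_sum_def)
  then show "good {x}" unfolding good_iff_coord_sum by blast
qed (simp add: box_singleton)

lemma vanishing_on_full_coord_const:
  assumes "full S" and van: "\<forall>x\<in>S. coord_sum u x = 0" and "r \<in> S" "a \<in> proj i S"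
  shows "u i a = u i (r i)"
proof -
  have "r(i := a) \<in> box S" using assms(3,4) by (auto simp: box_def proj_def)
  then have "coord_sum u (r(i := a)) = 0" by (rule full_vanishing_on_box[OF assms(1) van])
  with van \<open>r \<in> S\<close> show ?thesis by (simp add: coord_sum_update)
qed

lemma full_Un:
  assumes "good (S \<union> T)" "full S" "full T" "r \<in> S" "r \<in> T"
  shows "full (S \<union> T)"
proof (rule full_if_vanishing_on_box[OF \<open>good (S \<union> T)\<close>])
  fix u z assume van: "\<forall>x\<in>S \<union> T. coord_sum u x = 0" and z: "z \<in> box (S \<union> T)"
  have "u i (z i) = u i (r i)" for i
  proof -
    have "z i \<in> proj i S \<or> z i \<in> proj i T" using z by (auto simp: box_def proj_Un)
    moreover have "\<forall>x\<in>S. coord_sum u x = 0" "\<forall>x\<in>T. coord_sum u x = 0" using van by auto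
    ultimately show ?thesis
      using vanishing_on_full_coord_const[OF \<open>full S\<close> _ \<open>r \<in> S\<close>] vanishing_on_full_coord_const[OF \<open>full T\<close> _ \<open>r \<in> T\<close>]
      by blast
  qed
  then have "coord_sum u z = coord_sum u r" by (simp add: coord_sum_def)
  with van \<open>r \<in> S\<close> show "coord_sum u z = 0" by simp
qed

lemma related_refl: "x \<in> S \<Longrightarrow> related S x x"
  unfolding related_def using full_singleton by blast

lemma related_imp_mem: "related S x y \<Longrightarrow> y \<in> S"
  unfolding related_def by blast

lemma mem_related_components:
  "R \<in> related_components S \<longleftrightarrow> (\<exists>r\<in>S. R = {y. related S r y})"
  by (auto simp: related_components_def quotient_def)

lemma Union_related_components: "\<Union>(related_components S) = S"
proof
  show "\<Union>(related_components S) \<subseteq> S"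
    using related_imp_mem by (auto simp: mem_related_components)
  show "S \<subseteq> \<Union>(related_components S)"
  proof
    fix x assume "x \<in> S"
    then have "x \<in> {y. related S x y}" "{y. related S x y} \<in> related_components S"
      using related_refl by (auto simp: mem_related_components)
    then show "x \<in> \<Union>(related_components S)" by blast
  qed
qed

lemma finite_full_superset:
  assumes "good S" "r \<in> S" "finite P" "\<forall>p\<in>P. related S r p"
  shows "\<exists>T. finite T \<and> full T \<and> T \<subseteq> S \<and> r \<in> T \<and> P \<subseteq> T"
  using \<open>finite P\<close> \<open>\<forall>p\<in>P. related S r p\<close>
proof (induction P rule: finite_induct)
  case empty
  show ?case using \<open>r \<in> S\<close> full_singleton[of r] by (intro exI[of _ "{r}"]) simp
next
  case (insert p P)
  from insert.prems have "\<forall>p\<in>P. related S r p" "related S r p" by simp_all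
  with insert.IH obtain T where T: "finite T" "full T" "T \<subseteq> S" "r \<in> T" "P \<subseteq> T" by blast
  from \<open>related S r p\<close> obtain T' where T': "finite T'" "full T'" "T' \<subseteq> S" "r \<in> T'" "p \<in> T'"
    unfolding related_def by blast
  have "good (T \<union> T')" using T(3) T'(3) by (intro good_mono[OF \<open>good S\<close>]) simp
  then have "full (T \<union> T')" using T(2) T'(2) T(4) T'(4) by (rule full_Un)
  with T T' show ?case by (intro exI[of _ "T \<union> T'"]) auto
qed

lemma finite_full_subset_of_related_component:
  assumes "good S" "R \<in> related_components S" "finite P" "P \<subseteq> R"
  shows "\<exists>T. finite T \<and> full T \<and> T \<noteq> {} \<and> T \<subseteq> R \<and> P \<subseteq> T"
proof -
  from \<open>R \<in> related_components S\<close> obtain r where r: "r \<in> S" "R = {y. related S r y}"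
    by (auto simp: mem_related_components)
  with assms obtain T where T: "finite T" "full T" "T \<subseteq> S" "r \<in> T" "P \<subseteq> T"
    using finite_full_superset[of S r P] by blast
  \<comment> \<open>T itself witnesses that its points are related to r\<close>
  have "T \<subseteq> R" using T r unfolding related_def by blast
  with T show ?thesis by blast
qed

lemma full_UN_linked:
  fixes Q :: "('i::finite \<Rightarrow> 'a) set set" and T :: "('i \<Rightarrow> 'a) set \<Rightarrow> ('i \<Rightarrow> 'a) set"
  assumes "full F" "\<Union>Q = F"
    and T: "\<And>R. R \<in> Q \<Longrightarrow> full (T R) \<and> T R \<noteq> {} \<and> T R \<subseteq> R"
    and linked: "\<And>R R' i. R \<in> Q \<Longrightarrow> R' \<in> Q \<Longrightarrow> proj i R \<inter> proj i R' \<noteq> {} \<Longrightarrow>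
      proj i (T R) \<inter> proj i (T R') \<noteq> {}"
  shows "full (\<Union>R\<in>Q. T R)"
proof (rule full_if_vanishing_on_box)
  have sub: "(\<Union>R\<in>Q. T R) \<subseteq> F" using T \<open>\<Union>Q = F\<close> by blast
  then show "good (\<Union>R\<in>Q. T R)" using \<open>full F\<close> good_mono by (auto simp: full_def)
  fix u z assume van: "\<forall>x\<in>\<Union>R\<in>Q. T R. coord_sum u x = 0" and z: "z \<in> box (\<Union>R\<in>Q. T R)"
  define t where "t R i = u i ((SOME r. r \<in> T R) i)" for R i
  have rep: "(SOME r. r \<in> T R) \<in> T R" if "R \<in> Q" for R
    using T[OF that] by (simp add: some_in_eq)
  have t: "u i a = t R i" if "R \<in> Q" "a \<in> proj i (T R)" for R i a
  proof -
    have "\<forall>x\<in>T R. coord_sum u x = 0" using van that(1) by blast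
    with T[OF that(1)] rep[OF that(1)] that(2) show ?thesis
      unfolding t_def by (blast intro: vanishing_on_full_coord_const)
  qed
  have t_sum: "(\<Sum>i\<in>UNIV. t R i) = 0" if "R \<in> Q" for R
    using van rep[OF that] that by (simp add: t_def coord_sum_def)
  have t_linked: "t R i = t R' i" if "R \<in> Q" "R' \<in> Q" "a \<in> proj i R" "a \<in> proj i R'" for R R' i a
  proof -
    from linked that obtain b where "b \<in> proj i (T R)" "b \<in> proj i (T R')" by blast
    then show ?thesis using t[OF that(1)] t[OF that(2)] by metis
  qed
  define v where "v i a = t (SOME R. R \<in> Q \<and> a \<in> proj i R) i" for i a
  have v: "v i a = t R i" if "R \<in> Q" "a \<in> proj i R" for R i a
  proof -
    let ?R = "SOME R. R \<in> Q \<and> a \<in> proj i R"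
    have "?R \<in> Q \<and> a \<in> proj i ?R" by (rule someI[where x = R]) (use that in blast)
    then show ?thesis unfolding v_def using t_linked[OF _ that(1) _ that(2)] by blast
  qed
  have "coord_sum v w = 0" if "w \<in> F" for w
  proof -
    from that \<open>\<Union>Q = F\<close> obtain R where "R \<in> Q" "w \<in> R" by blast
    then have "coord_sum v w = (\<Sum>i\<in>UNIV. t R i)"
      unfolding coord_sum_def using v[OF \<open>R \<in> Q\<close>] by (simp add: proj_def)
    with t_sum \<open>R \<in> Q\<close> show ?thesis by simp
  qed
  moreover have "z \<in> box F" using z box_mono[OF sub] by blast
  ultimately have "coord_sum v z = 0" using full_vanishing_on_box[OF \<open>full F\<close>] by blast
  moreover have "u i (z i) = v i (z i)" for i
  proof -
    have "z i \<in> proj i (\<Union>R\<in>Q. T R)" using z by (simp add: box_def)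
    then obtain R where R: "R \<in> Q" "z i \<in> proj i (T R)" by (auto simp: proj_def)
    moreover have "proj i (T R) \<subseteq> proj i R" using T[OF \<open>R \<in> Q\<close>] by (auto simp: proj_def)
    ultimately have "z i \<in> proj i R" by blast
    with t[OF R] v[OF R(1)] show ?thesis by simp
  qed
  ultimately show "coord_sum u z = 0" by (simp add: coord_sum_def)
qed

lemma related_if_finite_related_components:
  fixes F :: "('i::finite \<Rightarrow> 'a) set"
  assumes "full F" "finite (related_components F)" "x \<in> F" "y \<in> F"
  shows "related F x y"
proof -
  let ?Q = "related_components F"
  define w where "w R R' i = (SOME pq. fst pq \<in> R \<and> snd pq \<in> R' \<and> fst pq i = snd pq i)"
    for R R' :: "('i \<Rightarrow> 'a) set" and i
  have w: "fst (w R R' i) \<in> R \<and> snd (w R R' i) \<in> R' \<and> fst (w R R' i) i = snd (w R R' i) i"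
    if "proj i R \<inter> proj i R' \<noteq> {}" for R R' i
  proof -
    from that obtain a where "a \<in> proj i R" "a \<in> proj i R'" by blast
    then obtain p q where "p \<in> R" "q \<in> R'" "p i = q i" unfolding proj_def by blast
    then have "\<exists>pq. fst pq \<in> R \<and> snd pq \<in> R' \<and> fst pq i = snd pq i"
      by (intro exI[of _ "(p, q)"]) simp
    then show ?thesis unfolding w_def by (rule someI_ex)
  qed
  define P where "P = {x, y} \<union> (\<Union>R\<in>?Q. \<Union>R'\<in>?Q. \<Union>i. {fst (w R R' i), snd (w R R' i)})"
  have "finite P" using \<open>finite ?Q\<close> by (simp add: P_def)
  have "\<exists>T. finite T \<and> full T \<and> T \<noteq> {} \<and> T \<subseteq> R \<and> P \<inter> R \<subseteq> T" if "R \<in> ?Q" for R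
    using \<open>full F\<close> that \<open>finite P\<close>
    by (intro finite_full_subset_of_related_component) (auto simp: full_def)
  then obtain T where T: "\<And>R. R \<in> ?Q \<Longrightarrow> finite (T R) \<and> full (T R) \<and> T R \<noteq> {} \<and> T R \<subseteq> R \<and> P \<inter> R \<subseteq> T R"
    by metis
  have "full (\<Union>R\<in>?Q. T R)"
  proof (rule full_UN_linked[OF \<open>full F\<close> Union_related_components])
    fix R R' i assume R: "R \<in> ?Q" "R' \<in> ?Q" and meet: "proj i R \<inter> proj i R' \<noteq> {}"
    have "fst (w R R' i) \<in> P" "snd (w R R' i) \<in> P" using R unfolding P_def by blast+
    with w[OF meet] T[OF R(1)] T[OF R(2)]
    have "fst (w R R' i) \<in> T R" "snd (w R R' i) \<in> T R'" by blast+
    with w[OF meet] show "proj i (T R) \<inter> proj i (T R') \<noteq> {}" by (auto simp: proj_def)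
  qed (use T in blast)
  moreover have "finite (\<Union>R\<in>?Q. T R)" using T \<open>finite ?Q\<close> by blast
  moreover have "(\<Union>R\<in>?Q. T R) \<subseteq> F" using T Union_related_components by blast
  moreover have "p \<in> (\<Union>R\<in>?Q. T R)" if "p \<in> F" "p \<in> P" for p
  proof -
    from \<open>p \<in> F\<close> obtain R where "R \<in> ?Q" "p \<in> R"
      using Union_related_components by blast
    with T[OF \<open>R \<in> ?Q\<close>] \<open>p \<in> P\<close> show ?thesis by blast
  qed
  then have "x \<in> (\<Union>R\<in>?Q. T R)" "y \<in> (\<Union>R\<in>?Q. T R)"
    using assms(3,4) by (auto simp: P_def)
  ultimately show ?thesis unfolding related_def by blast
qed

theorem theorem1:
  fixes X :: "'i::finite \<Rightarrow> 'a set" and F :: "('i \<Rightarrow> 'a) set"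
  assumes "\<forall>i. X i \<noteq> {}"
    and "F \<subseteq> {x. \<forall>i. x i \<in> X i}"
    and "full F"
    and "F \<noteq> {}"
    and "finite (related_components F)"
  shows "card (related_components F) = 1"
proof -
  have "{y. related F r y} = F" if "r \<in> F" for r
    using related_if_finite_related_components[OF assms(3,5) that] related_imp_mem by blast
  then have "related_components F = {F}"
    using \<open>F \<noteq> {}\<close> by (auto simp: mem_related_components)
  then show ?thesis by simp
qed

end
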